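(* The subspace $\mathbf{\Pi}$ is a graded sub-bialgebra of $(\textbf{W},\nabla_{\sqcup\!\sqcup},\iota_{\sqcup\!\sqcup},\Delta_\odot,\epsilon_\odot)$.
   Context: Let $\Bbbk$ be a field. A word is a finite sequence of positive integers. For a word $w=w_1\cdots w_m$ with $\max(w)\le n\in\mathbb{N}$, $[w,n]$ denotes the linear endomorphism of the shuffle algebra (span of all words) sending a word $v$ of length $n$ to $v_{w_1}\cdots v_{w_m}$ and other words to $0$; $\textbf{W}$ is the span of all such $[w,n]$, graded by $\deg[w,n]=m$. $\textbf{W}$ is a graded bialgebra with product $\nabla_{\sqcup\!\sqcup}([v,m]\otimes[w,n]) = [v\sqcup\!\sqcup (w\uparrow m), m+n]$ ($\sqcup\!\sqcup$ the shuffle product of words, $w\uparrow m$ adds $m$ to each letter), unit $\iota_{\sqcup\!\sqcup}(1)=[\emptyset,0]$, coproduct $\Delta_\odot([w,n])=\sum_{i=0}^m [w_1\cdots w_i,n]\otimes[w_{i+1}\cdots w_m,n]$ and counit $\epsilon_\odot([w,n])=1$ if $w=\emptyset$, else $0$. For $\pi$ in the symmetric group $S_{n+1}$ with simple transpositions $s_i=(i,i+1)$, let $\mathcal{R}(\pi)$ be its set of reduced words and $[\pi]=\sum_{w\in\mathcal{R}(\pi)}[w,n]\in\textbf{W}$. Let $\mathbf{\Pi}_n$ be the span of $\{[\pi]:\pi\in S_{n+1}\}$ and $\mathbf{\Pi}=\bigoplus_{n\in\mathbb{N}}\mathbf{\Pi}_n$. *)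

theory Defs
  imports "HOL.Modules" "HOL-Library.Poly_Mapping" "HOL-Library.Multiset" "HOL-Combinatorics.Permutations"
          "HOL-Combinatorics.Transposition"
begin

text \<open>Words are lists of positive naturals. The symbol [w,n] (with letters of w in {1..n})
  is a basis element; since the [w,n] are linearly independent endomorphisms, W is the free
  vector space on the pairs (w,n) with set w a subset of {1..n}.\<close>

type_synonym 'k W = "(nat list \<times> nat) \<Rightarrow>\<^sub>0 'k"
type_synonym 'k WW = "((nat list \<times> nat) \<times> (nat list \<times> nat)) \<Rightarrow>\<^sub>0 'k"

definition pm_smult :: "'k::field \<Rightarrow> ('a \<Rightarrow>\<^sub>0 'k) \<Rightarrow> ('a \<Rightarrow>\<^sub>0 'k)" where
  "pm_smult c p = Poly_Mapping.map (\<lambda>x. c * x) p"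

definition lin_span :: "('a \<Rightarrow>\<^sub>0 'k::field) set \<Rightarrow> ('a \<Rightarrow>\<^sub>0 'k) set" where
  "lin_span S = module.span pm_smult S"

definition W_space :: "'k::field W set" where
  "W_space = {a. \<forall>(w,n)\<in>Poly_Mapping.keys a. set w \<subseteq> {1..n}}"

definition W_basis :: "nat list \<Rightarrow> nat \<Rightarrow> 'k::field W" where
  "W_basis w n = Poly_Mapping.single (w, n) 1"

definition W_deg_part :: "nat \<Rightarrow> 'k::field W \<Rightarrow> 'k W" where
  "W_deg_part d a = (\<Sum>x\<in>Poly_Mapping.keys a. if length (fst x) = d then Poly_Mapping.single x (Poly_Mapping.lookup a x) else 0)"

fun shuffle_ms :: "nat list \<Rightarrow> nat list \<Rightarrow> nat list multiset" where
  "shuffle_ms [] ys = {#ys#}"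
| "shuffle_ms xs [] = {#xs#}"
| "shuffle_ms (x # xs) (y # ys) =
     image_mset ((#) x) (shuffle_ms xs (y # ys)) + image_mset ((#) y) (shuffle_ms (x # xs) ys)"

definition shift_word :: "nat list \<Rightarrow> nat \<Rightarrow> nat list" where
  "shift_word w m = map (\<lambda>i. i + m) w"

definition W_mult_basis :: "nat list \<times> nat \<Rightarrow> nat list \<times> nat \<Rightarrow> 'k::field W" where
  "W_mult_basis x y = (case x of (v, m) \<Rightarrow> case y of (w, n) \<Rightarrow>
     sum_mset (image_mset (\<lambda>u. W_basis u (m + n)) (shuffle_ms v (shift_word w m))))"

definition W_mult :: "'k::field W \<Rightarrow> 'k W \<Rightarrow> 'k W" where
  "W_mult a b = (\<Sum>x\<in>Poly_Mapping.keys a. \<Sum>y\<in>Poly_Mapping.keys b. pm_smult (Poly_Mapping.lookup a x * Poly_Mapping.lookup b y) (W_mult_basis x y))"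

definition W_unit :: "'k::field W" where
  "W_unit = W_basis [] 0"

text \<open>W tensor W is the free vector space on pairs of basis elements.\<close>
definition W_tensor :: "'k::field W \<Rightarrow> 'k W \<Rightarrow> 'k WW" where
  "W_tensor a b = (\<Sum>x\<in>Poly_Mapping.keys a. \<Sum>y\<in>Poly_Mapping.keys b. Poly_Mapping.single (x, y) (Poly_Mapping.lookup a x * Poly_Mapping.lookup b y))"

definition W_coprod_basis :: "nat list \<times> nat \<Rightarrow> 'k::field WW" where
  "W_coprod_basis x = (case x of (w, n) \<Rightarrow>
     (\<Sum>i\<in>{0..length w}. Poly_Mapping.single ((take i w, n), (drop i w, n)) 1))"

definition W_coprod :: "'k::field W \<Rightarrow> 'k WW" where
  "W_coprod a = (\<Sum>x\<in>Poly_Mapping.keys a. pm_smult (Poly_Mapping.lookup a x) (W_coprod_basis x))"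

definition W_counit :: "'k::field W \<Rightarrow> 'k" where
  "W_counit a = (\<Sum>x\<in>Poly_Mapping.keys a. if fst x = [] then Poly_Mapping.lookup a x else 0)"

text \<open>Symmetric group S_{n+1} as permutations of {1..n+1}; s_i = transposition (i,i+1).
  A word w (letters in {1..n}) represents s_{w_1} \<circ> ... \<circ> s_{w_m}.\<close>
definition word_perm :: "nat list \<Rightarrow> nat \<Rightarrow> nat" where
  "word_perm w = foldr (\<lambda>i f. transpose i (Suc i) \<circ> f) w id"

definition is_word_for :: "nat \<Rightarrow> (nat \<Rightarrow> nat) \<Rightarrow> nat list \<Rightarrow> bool" where
  "is_word_for n \<pi> w \<longleftrightarrow> set w \<subseteq> {1..n} \<and> word_perm w = \<pi>"

definition reduced_words :: "nat \<Rightarrow> (nat \<Rightarrow> nat) \<Rightarrow> nat list set" where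
  "reduced_words n \<pi> = {w. is_word_for n \<pi> w \<and> (\<forall>u. is_word_for n \<pi> u \<longrightarrow> length w \<le> length u)}"

definition perm_elt :: "nat \<Rightarrow> (nat \<Rightarrow> nat) \<Rightarrow> 'k::field W" where
  "perm_elt n \<pi> = (\<Sum>w\<in>reduced_words n \<pi>. W_basis w n)"

definition Pi_space :: "'k::field W set" where
  "Pi_space = lin_span {perm_elt n \<pi> | n \<pi>. \<pi> permutes {1..n+1}}"

definition tensor_span :: "'k::field W set \<Rightarrow> 'k WW set" where
  "tensor_span A = lin_span {W_tensor a b | a b. a \<in> A \<and> b \<in> A}"

end

(* The subspace is spanned by the elements [pi], so every structure map only has to be checked
   on them. All reduced words of pi have the length inv(pi), the number of inversions of pi,
   so [pi] is homogeneous, and the unit is the element of the identity of S_1.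

   Cutting the reduced words of pi in two gives exactly the pairs (u, v) of reduced words whose
   concatenation is a reduced word of pi; grouped by the permutations (sigma, tau) of u and v,
   every group is the full product R(sigma) x R(tau). Hence Delta [pi] is a sum of tensors
   [sigma] (x) [tau].

   The product [sigma] [tau] is the sum of the words u whose letters <= m form a reduced word of
   sigma and whose letters > m, shifted down by m, form a reduced word of tau. Such a u is
   reduced, and every reduced word of the same permutation is again of this form: by
   Matsumoto's theorem it is reached from u by braid moves, and a braid move either acts inside
   one of the two parts or, straddling the letters m and m + 1, would produce a repeated letter
   in one part. So these words make up complete sets of reduced words, and the product is a sum
   of elements [pi]. *)

theory Submission
  imports Defs
begin

section \<open>Words in the simple transpositions\<close>

abbreviation adj_transp :: "nat \<Rightarrow> nat \<Rightarrow> nat" where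
  "adj_transp i \<equiv> Transposition.transpose i (Suc i)"

lemma word_perm_Nil [simp]: "word_perm [] = id"
  by (simp add: word_perm_def)

lemma word_perm_Cons [simp]: "word_perm (i # w) = adj_transp i \<circ> word_perm w"
  by (simp add: word_perm_def)

lemma word_perm_append [simp]: "word_perm (u @ v) = word_perm u \<circ> word_perm v"
  by (induction u) (simp_all add: comp_assoc)

lemma word_perm_rev_comp: "word_perm (rev w) \<circ> word_perm w = id"
  by (induction w) (simp_all add: comp_assoc)

lemma word_perm_permutes: "set w \<subseteq> {1..N} \<Longrightarrow> word_perm w permutes {1..Suc N}"
  by (induction w) (auto intro!: permutes_compose permutes_swap_id simp: permutes_id)

lemma inj_adjacent_neq: "inj p \<Longrightarrow> p i \<noteq> p (Suc i)"
  by (metis injD n_not_Suc_n)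

lemma comp_adj_transp_cancel [simp]: "f \<circ> adj_transp i \<circ> adj_transp i = f"
  by (simp add: comp_assoc)

section \<open>Inversions\<close>

definition inversions :: "(nat \<Rightarrow> nat) \<Rightarrow> (nat \<times> nat) set" where
  "inversions p = {(a, b). a < b \<and> p b < p a}"

definition inversion_number :: "(nat \<Rightarrow> nat) \<Rightarrow> nat" where
  "inversion_number p = card (inversions p)"

lemma inversions_subset:
  assumes "p permutes {1..K}"
  shows "inversions p \<subseteq> {1..K} \<times> {1..K}"
proof
  fix x assume "x \<in> inversions p"
  then obtain a b where x: "x = (a, b)" and ab: "a < b" "p b < p a"
    by (auto simp: inversions_def)
  have fix_out: "p y = y" if "y \<notin> {1..K}" for y
    using permutes_not_in[OF assms that] .
  have stay_in: "p y \<in> {1..K}" if "y \<in> {1..K}" for y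
    using permutes_in_image[OF assms] that by blast
  have "b \<in> {1..K}"
  proof (rule ccontr)
    assume "b \<notin> {1..K}"
    then show False
      using ab fix_out[of b] fix_out[of a] stay_in[of a] by (cases "a \<in> {1..K}") auto
  qed
  moreover have "a \<in> {1..K}"
    using ab \<open>b \<in> {1..K}\<close> fix_out[of a] by (cases "a = 0") auto
  ultimately show "x \<in> {1..K} \<times> {1..K}"
    using x by simp
qed

lemma finite_inversions: "p permutes {1..K} \<Longrightarrow> finite (inversions p)"
  using finite_subset[OF inversions_subset] by blast

lemma inversion_number_id [simp]: "inversion_number id = 0"
proof -
  have "inversions id = {}"
    by (auto simp: inversions_def)
  then show ?thesis
    by (simp add: inversion_number_def)
qed

lemma adj_transp_less_iff:
  assumes "(a, b) \<noteq> (i, Suc i)" "(a, b) \<noteq> (Suc i, i)"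
  shows "adj_transp i a < adj_transp i b \<longleftrightarrow> a < b"
  using assms unfolding transpose_def by (simp split: if_splits) presburger

lemma inversions_comp_adj_transp:
  "x \<in> inversions (p \<circ> adj_transp i) - {(i, Suc i)}
    \<longleftrightarrow> map_prod (adj_transp i) (adj_transp i) x \<in> inversions p - {(i, Suc i)}"
proof (cases x)
  case (Pair a b)
  let ?s = "adj_transp i"
  consider "(a, b) = (i, Suc i)" | "(a, b) = (Suc i, i)" | "(a, b) \<noteq> (i, Suc i)" "(a, b) \<noteq> (Suc i, i)"
    by blast
  then show ?thesis
  proof cases
    case 3
    have "(?s a, ?s b) \<noteq> (i, Suc i)"
    proof
      assume "(?s a, ?s b) = (i, Suc i)"
      then have "(?s (?s a), ?s (?s b)) = (?s i, ?s (Suc i))"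
        by simp
      then show False
        using 3 by simp
    qed
    then show ?thesis
      using 3 Pair adj_transp_less_iff[OF 3] by (simp add: inversions_def)
  qed (use Pair in \<open>simp_all add: inversions_def\<close>)
qed

lemma card_inversions_comp_adj_transp_Diff:
  "card (inversions (p \<circ> adj_transp i) - {(i, Suc i)}) = card (inversions p - {(i, Suc i)})"
proof -
  let ?f = "map_prod (adj_transp i) (adj_transp i)"
  have f_inv: "?f (?f x) = x" for x
    by (cases x) simp
  have "inj ?f" "surj ?f"
    by (rule inj_on_inverseI[where g = ?f], rule f_inv, rule surjI[where f = ?f], rule f_inv)
  moreover have "inversions (p \<circ> adj_transp i) - {(i, Suc i)} = ?f -` (inversions p - {(i, Suc i)})"
    using inversions_comp_adj_transp by blast
  ultimately show ?thesis
    by (simp add: card_vimage_inj)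
qed

lemma inversion_number_comp_adj_transp:
  assumes p: "p permutes {1..K}" and i: "1 \<le> i" "Suc i \<le> K"
  shows inversion_number_comp_adj_transp_ascent:
      "p i < p (Suc i) \<Longrightarrow> inversion_number (p \<circ> adj_transp i) = inversion_number p + 1"
    and inversion_number_comp_adj_transp_descent:
      "p (Suc i) < p i \<Longrightarrow> inversion_number (p \<circ> adj_transp i) + 1 = inversion_number p"
proof -
  let ?s = "adj_transp i" and ?q = "(i, Suc i)"
  have "p \<circ> ?s permutes {1..K}"
    using p i by (intro permutes_compose permutes_swap_id) auto
  then have fin: "finite (inversions p)" "finite (inversions (p \<circ> ?s))"
    using p by (simp_all add: finite_inversions)
  note same = card_inversions_comp_adj_transp_Diff[of p i]
  have q_new: "?q \<in> inversions (p \<circ> ?s) \<longleftrightarrow> p i < p (Suc i)"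
    and q_old: "?q \<in> inversions p \<longleftrightarrow> p (Suc i) < p i"
    by (simp_all add: inversions_def)
  show "inversion_number (p \<circ> ?s) = inversion_number p + 1" if "p i < p (Suc i)"
  proof -
    have "?q \<in> inversions (p \<circ> ?s)" "?q \<notin> inversions p"
      using that q_new q_old by simp_all
    then have "card (inversions (p \<circ> ?s)) = Suc (card (inversions (p \<circ> ?s) - {?q}))"
      and "inversions p - {?q} = inversions p"
      using card.remove[OF fin(2)] by simp_all
    with same show ?thesis
      by (simp add: inversion_number_def)
  qed
  show "inversion_number (p \<circ> ?s) + 1 = inversion_number p" if "p (Suc i) < p i"
  proof -
    have "?q \<in> inversions p" "?q \<notin> inversions (p \<circ> ?s)"
      using that q_new q_old by simp_all
    then have "card (inversions p) = Suc (card (inversions p - {?q}))"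
      and "inversions (p \<circ> ?s) - {?q} = inversions (p \<circ> ?s)"
      using card.remove[OF fin(1)] by simp_all
    with same show ?thesis
      by (simp add: inversion_number_def)
  qed
qed

lemma inversion_number_comp_adj_transp_le:
  assumes "p permutes {1..K}" "1 \<le> i" "Suc i \<le> K"
  shows "inversion_number (p \<circ> adj_transp i) \<le> inversion_number p + 1"
proof -
  have "p i \<noteq> p (Suc i)"
    using inj_adjacent_neq[OF permutes_inj[OF assms(1)]] .
  then show ?thesis
    using inversion_number_comp_adj_transp[OF assms] by (cases "p i < p (Suc i)") auto
qed

lemma inversion_number_comp_word_perm_le:
  assumes "p permutes {1..Suc N}" "set w \<subseteq> {1..N}"
  shows "inversion_number (p \<circ> word_perm w) \<le> inversion_number p + length w"
  using assms
proof (induction w arbitrary: p)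
  case (Cons i w)
  have "p \<circ> adj_transp i permutes {1..Suc N}"
    using Cons.prems by (intro permutes_compose permutes_swap_id) auto
  moreover have "set w \<subseteq> {1..N}"
    using Cons.prems(2) by simp
  ultimately have "inversion_number (p \<circ> adj_transp i \<circ> word_perm w)
      \<le> inversion_number (p \<circ> adj_transp i) + length w"
    by (rule Cons.IH)
  also have "\<dots> \<le> inversion_number p + length (i # w)"
    using inversion_number_comp_adj_transp_le[OF Cons.prems(1)] Cons.prems(2) by simp
  finally show ?case
    by (simp only: word_perm_Cons comp_assoc)
qed simp

lemma inversion_number_word_perm_le: "set w \<subseteq> {1..N} \<Longrightarrow> inversion_number (word_perm w) \<le> length w"
  using inversion_number_comp_word_perm_le[of id N w] by (simp add: permutes_id)

lemma no_inversions_imp_id: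
  assumes "bij p" "inversions p = {}"
  shows "p = id"
proof -
  have "strict_mono p"
  proof (rule strict_monoI)
    fix a b :: nat assume "a < b"
    have "p a \<noteq> p b"
      using \<open>a < b\<close> bij_is_inj[OF assms(1)] by (metis injD less_irrefl)
    moreover have "\<not> p b < p a"
      using \<open>a < b\<close> assms(2) by (auto simp: inversions_def)
    ultimately show "p a < p b"
      by simp
  qed
  have p_inv: "p (inv p k) = k" for k
    using assms(1) by (simp add: bij_is_surj surj_f_inv_f)
  have "strict_mono (inv p)"
  proof (rule strict_monoI, rule ccontr)
    fix a b :: nat assume "a < b" "\<not> inv p a < inv p b"
    then have "p (inv p b) \<le> p (inv p a)"
      using strict_mono_less_eq[OF \<open>strict_mono p\<close>] by simp
    then show False
      using \<open>a < b\<close> by (simp add: p_inv)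
  qed
  have "p k = k" for k
  proof (rule antisym)
    have "p k \<le> p (inv p k)"
      using strict_mono_imp_increasing[OF \<open>strict_mono (inv p)\<close>, of k]
        strict_mono_less_eq[OF \<open>strict_mono p\<close>] by simp
    then show "p k \<le> k"
      by (simp add: p_inv)
    show "k \<le> p k"
      by (rule strict_mono_imp_increasing[OF \<open>strict_mono p\<close>])
  qed
  then show ?thesis
    by auto
qed

lemma descent_between:
  fixes p :: "nat \<Rightarrow> nat"
  assumes "a < b" "p b < p a"
  obtains c where "a \<le> c" "c < b" "p (Suc c) < p c"
proof -
  have "p a \<le> p b" if ascents: "\<And>c. a \<le> c \<Longrightarrow> c < b \<Longrightarrow> p c \<le> p (Suc c)"
    using less_imp_le[OF assms(1)] by (induction b rule: dec_induct) (use ascents order_trans in auto)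
  then show ?thesis
    using assms that by (meson leD not_le_imp_less)
qed

lemma exists_reduced_word:
  "p permutes {1..Suc N} \<Longrightarrow>
    \<exists>w. set w \<subseteq> {1..N} \<and> word_perm w = p \<and> length w = inversion_number p"
proof (induction "inversion_number p" arbitrary: p)
  case 0
  then have "inversions p = {}"
    using finite_inversions by (simp add: inversion_number_def)
  then have "p = id"
    using no_inversions_imp_id permutes_bij[OF "0.prems"] by blast
  then show ?case
    using "0.hyps" by (intro exI[of _ "[]"]) simp
next
  case (Suc k)
  then have "inversions p \<noteq> {}"
    by (auto simp: inversion_number_def)
  then obtain a b where ab: "a < b" "p b < p a" and "(a, b) \<in> inversions p"
    by (auto simp: inversions_def)
  then have "a \<in> {1..Suc N}" "b \<in> {1..Suc N}"
    using inversions_subset[OF Suc.prems] by auto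
  obtain c where c: "a \<le> c" "c < b" "p (Suc c) < p c"
    using descent_between[OF ab] .
  with \<open>a \<in> {1..Suc N}\<close> \<open>b \<in> {1..Suc N}\<close> have c_range: "1 \<le> c" "Suc c \<le> Suc N"
    by auto
  have "p \<circ> adj_transp c permutes {1..Suc N}"
    using Suc.prems c_range by (intro permutes_compose permutes_swap_id) auto
  moreover have "inversion_number (p \<circ> adj_transp c) = k"
    using inversion_number_comp_adj_transp_descent[OF Suc.prems c_range c(3)] Suc.hyps(2) by simp
  ultimately obtain w where w: "set w \<subseteq> {1..N}" "word_perm w = p \<circ> adj_transp c" "length w = k"
    using Suc.hyps(1) by blast
  show ?case
    using w c_range Suc.hyps(2) by (intro exI[of _ "w @ [c]"]) simp
qed

section \<open>Reduced words\<close>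

definition reduced :: "nat list \<Rightarrow> bool" where
  "reduced w \<longleftrightarrow> length w = inversion_number (word_perm w)"

lemma reduced_Nil [simp]: "reduced []"
  by (simp add: reduced_def)

lemma reduced_snoc_iff:
  assumes "set (x @ [i]) \<subseteq> {1..N}" "reduced x"
  shows "reduced (x @ [i]) \<longleftrightarrow> word_perm x i < word_perm x (Suc i)"
proof -
  have p: "word_perm x permutes {1..Suc N}" and i: "1 \<le> i" "Suc i \<le> Suc N"
    using assms(1) word_perm_permutes by auto
  have "word_perm x i \<noteq> word_perm x (Suc i)"
    using inj_adjacent_neq[OF permutes_inj[OF p]] .
  then show ?thesis
    using assms(2) inversion_number_comp_adj_transp[OF p i]
    by (cases "word_perm x i < word_perm x (Suc i)") (auto simp: reduced_def)
qed

lemma reduced_appendD: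
  assumes "set (u @ v) \<subseteq> {1..N}" "reduced (u @ v)"
  shows "reduced u" "reduced v"
proof -
  have u: "set u \<subseteq> {1..N}" and v: "set v \<subseteq> {1..N}"
    using assms(1) by auto
  have "length u + length v \<le> inversion_number (word_perm u) + length v"
    using assms(2) inversion_number_comp_word_perm_le[OF word_perm_permutes[OF u] v]
    by (simp add: reduced_def)
  then show "reduced u"
    using inversion_number_word_perm_le[OF u] by (simp add: reduced_def)
  obtain v' where v': "set v' \<subseteq> {1..N}" "word_perm v' = word_perm v"
    "length v' = inversion_number (word_perm v)"
    using exists_reduced_word[OF word_perm_permutes[OF v]] by blast
  have "length u + length v \<le> length (u @ v')"
    using assms(2) inversion_number_word_perm_le[of "u @ v'" N] u v' by (simp add: reduced_def)
  then show "reduced v"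
    using inversion_number_word_perm_le[OF v] v'(3) by (simp add: reduced_def)
qed

lemma not_reduced_repeated_letter:
  assumes "set (x @ a # a # y) \<subseteq> {1..N}"
  shows "\<not> reduced (x @ a # a # y)"
proof
  assume "reduced (x @ a # a # y)"
  then have "reduced (x @ [a, a])"
    using reduced_appendD(1)[of "x @ [a, a]" y N] assms by simp
  moreover have "inversion_number (word_perm x) \<le> length x"
    using assms inversion_number_word_perm_le[of x N] by simp
  ultimately show False
    by (simp add: reduced_def)
qed

lemma mem_reduced_words_iff:
  "w \<in> reduced_words N p \<longleftrightarrow> set w \<subseteq> {1..N} \<and> word_perm w = p \<and> reduced w"
proof
  assume "w \<in> reduced_words N p"
  then have w: "set w \<subseteq> {1..N}" "word_perm w = p"
    and minimal: "\<And>u. is_word_for N p u \<Longrightarrow> length w \<le> length u"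
    by (auto simp: reduced_words_def is_word_for_def)
  obtain u where "set u \<subseteq> {1..N}" "word_perm u = p" "length u = inversion_number p"
    using exists_reduced_word[OF word_perm_permutes[OF w(1)]] w(2) by blast
  then have "length w \<le> inversion_number p"
    using minimal[of u] by (simp add: is_word_for_def)
  then show "set w \<subseteq> {1..N} \<and> word_perm w = p \<and> reduced w"
    using w inversion_number_word_perm_le[OF w(1)] by (simp add: reduced_def)
next
  assume "set w \<subseteq> {1..N} \<and> word_perm w = p \<and> reduced w"
  then show "w \<in> reduced_words N p"
    using inversion_number_word_perm_le
    by (fastforce simp: reduced_words_def is_word_for_def reduced_def)
qed

lemma length_reduced_words: "w \<in> reduced_words N p \<Longrightarrow> length w = inversion_number p"
  by (auto simp: mem_reduced_words_iff reduced_def)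

lemma finite_reduced_words: "finite (reduced_words N p)"
proof (rule finite_subset)
  show "reduced_words N p \<subseteq> {w. set w \<subseteq> {1..N} \<and> length w = inversion_number p}"
    using length_reduced_words mem_reduced_words_iff by blast
qed (simp add: finite_lists_length_eq)

lemma append_mem_reduced_words_iff:
  assumes "u @ v \<in> reduced_words N p"
  shows "u' @ v' \<in> reduced_words N p \<and> word_perm u' = word_perm u \<and> word_perm v' = word_perm v
    \<longleftrightarrow> u' \<in> reduced_words N (word_perm u) \<and> v' \<in> reduced_words N (word_perm v)"
proof -
  have split: "u \<in> reduced_words N (word_perm u) \<and> v \<in> reduced_words N (word_perm v)"
    if "u @ v \<in> reduced_words N q" for u v q
    using that reduced_appendD[of u v N] by (simp add: mem_reduced_words_iff)
  show ?thesis
  proof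
    assume "u' \<in> reduced_words N (word_perm u) \<and> v' \<in> reduced_words N (word_perm v)"
    moreover have "length u' = length u \<and> length v' = length v"
      using calculation split[OF assms] length_reduced_words by metis
    ultimately show "u' @ v' \<in> reduced_words N p \<and> word_perm u' = word_perm u \<and> word_perm v' = word_perm v"
      using assms by (simp add: mem_reduced_words_iff reduced_def)
  qed (use split in metis)
qed

lemma reduced_words_snocD:
  assumes "x @ [i] \<in> reduced_words N p"
  shows "x \<in> reduced_words N (p \<circ> adj_transp i)" "p (Suc i) < p i"
proof -
  have xi: "set (x @ [i]) \<subseteq> {1..N}" "reduced (x @ [i])" "word_perm (x @ [i]) = p"
    using assms by (simp_all add: mem_reduced_words_iff)
  from xi(1,2) have "reduced x"
    by (rule reduced_appendD(1))
  moreover have "p \<circ> adj_transp i = word_perm x"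
    unfolding xi(3)[symmetric] by simp
  ultimately show "x \<in> reduced_words N (p \<circ> adj_transp i)"
    using xi by (simp add: mem_reduced_words_iff)
  have "word_perm x i < word_perm x (Suc i)"
    using reduced_snoc_iff[OF xi(1) \<open>reduced x\<close>] xi(2) by blast
  then show "p (Suc i) < p i"
    using xi(3) by auto
qed

lemma exists_reduced_word_with_suffix:
  assumes "p permutes {1..Suc N}" "set l \<subseteq> {1..N}"
    and "inversion_number (p \<circ> word_perm (rev l)) + length l = inversion_number p"
  obtains z where "z @ l \<in> reduced_words N p"
proof -
  have "p \<circ> word_perm (rev l) permutes {1..Suc N}"
    using assms(1,2) by (intro permutes_compose[OF word_perm_permutes]) auto
  then obtain z where z: "set z \<subseteq> {1..N}" "word_perm z = p \<circ> word_perm (rev l)"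
    "length z = inversion_number (p \<circ> word_perm (rev l))"
    using exists_reduced_word by blast
  have "word_perm (z @ l) = p"
    using z(2) word_perm_rev_comp[of l] by (simp add: comp_assoc)
  moreover have "set (z @ l) \<subseteq> {1..N}" "length (z @ l) = inversion_number p"
    using z(1,3) assms(2,3) by simp_all
  ultimately have "z @ l \<in> reduced_words N p"
    by (simp add: mem_reduced_words_iff reduced_def)
  then show ?thesis
    by (rule that)
qed

lemma reduced_word_ending_at_descent:
  assumes "p permutes {1..Suc N}" "i \<in> {1..N}" "p (Suc i) < p i"
  obtains z where "z @ [i] \<in> reduced_words N p"
proof (rule exists_reduced_word_with_suffix[OF assms(1)])
  show "inversion_number (p \<circ> word_perm (rev [i])) + length [i] = inversion_number p"
    using inversion_number_comp_adj_transp_descent[OF assms(1) _ _ assms(3)] assms(2) by simp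
qed (use assms(2) in auto)

section \<open>Matsumoto's theorem\<close>

inductive braid_move :: "nat list \<Rightarrow> nat list \<Rightarrow> bool" where
  commute: "Suc i < j \<or> Suc j < i \<Longrightarrow> braid_move [i, j] [j, i]"
| braid_up: "braid_move [i, Suc i, i] [Suc i, i, Suc i]"
| braid_down: "braid_move [Suc i, i, Suc i] [i, Suc i, i]"

inductive braid_step :: "nat list \<Rightarrow> nat list \<Rightarrow> bool" where
  "braid_move l r \<Longrightarrow> braid_step (x @ l @ y) (x @ r @ y)"

abbreviation braid_equiv :: "nat list \<Rightarrow> nat list \<Rightarrow> bool" where
  "braid_equiv \<equiv> braid_step\<^sup>*\<^sup>*"

lemma braid_move_word_perm: "braid_move l r \<Longrightarrow> word_perm l = word_perm r"
proof (induction rule: braid_move.induct)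
  case (commute i j)
  then have "adj_transp i \<circ> adj_transp j = adj_transp j \<circ> adj_transp i"
    by (intro swap_id_independent) auto
  then show ?case
    by (simp add: fun_eq_iff)
qed (auto simp: fun_eq_iff transpose_def)

lemma braid_move_length_set: "braid_move l r \<Longrightarrow> length l = length r \<and> set l = set r"
  by (induction rule: braid_move.induct) auto

lemma braid_step_invariants:
  assumes "braid_step u v"
  shows "word_perm u = word_perm v" "length u = length v" "set u = set v" "reduced u \<longleftrightarrow> reduced v"
  using assms braid_move_word_perm braid_move_length_set
  by (induction rule: braid_step.induct) (auto simp: reduced_def)

lemma reduced_words_braid_step: "braid_step u v \<Longrightarrow> u \<in> reduced_words N p \<Longrightarrow> v \<in> reduced_words N p"
  using braid_step_invariants by (metis mem_reduced_words_iff)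

lemma braid_equiv_append: "braid_equiv u v \<Longrightarrow> braid_equiv (u @ z) (v @ z)"
proof (induction rule: rtranclp_induct)
  case (step v w)
  then obtain x l r y where "braid_move l r" "v = x @ l @ y" "w = x @ r @ y"
    by (auto elim: braid_step.cases)
  then have "braid_step (v @ z) (w @ z)"
    using braid_step.intros[of l r x "y @ z"] by simp
  with step.IH show ?case
    by (rule rtranclp.rtrancl_into_rtrancl)
qed simp

lemma inversion_number_descent_snoc:
  assumes "p permutes {1..Suc N}" "set w \<subseteq> {1..N}" "k \<in> {1..N}"
    and "inversion_number (p \<circ> word_perm w) + length w = inversion_number p"
    and "(p \<circ> word_perm w) (Suc k) < (p \<circ> word_perm w) k"
  shows "inversion_number (p \<circ> word_perm (w @ [k])) + length (w @ [k]) = inversion_number p"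
proof -
  have "p \<circ> word_perm w permutes {1..Suc N}"
    using assms(1,2) by (intro permutes_compose[OF word_perm_permutes]) auto
  then have "inversion_number (p \<circ> word_perm w \<circ> adj_transp k) + 1 = inversion_number (p \<circ> word_perm w)"
    using assms(3,5) by (intro inversion_number_comp_adj_transp_descent) auto
  moreover have "p \<circ> word_perm (w @ [k]) = p \<circ> word_perm w \<circ> adj_transp k"
    by (simp add: fun_eq_iff)
  ultimately show ?thesis
    using assms(4) by simp
qed

text \<open>If \<open>i\<close> and \<open>j\<close> are both descents of \<open>p\<close>, the longest element of the subgroup
  generated by \<open>s\<^sub>i\<close> and \<open>s\<^sub>j\<close>, whose two reduced words are \<open>l @ [i]\<close> and
  \<open>r @ [j]\<close>, is a length-additive right factor of \<open>p\<close>.\<close>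

lemma braid_move_at_descents:
  assumes p: "p permutes {1..Suc N}" and ij: "i \<in> {1..N}" "j \<in> {1..N}" "i \<noteq> j"
    and descents: "p (Suc i) < p i" "p (Suc j) < p j"
  obtains l r where "braid_move (l @ [i]) (r @ [j])" "set l \<subseteq> {1..N}"
    "inversion_number (p \<circ> word_perm (rev (l @ [i]))) + length (l @ [i]) = inversion_number p"
proof -
  note step = inversion_number_descent_snoc[OF p]
  have start: "inversion_number (p \<circ> word_perm []) + length [] = inversion_number p"
    by simp
  consider "Suc i < j \<or> Suc j < i" | "j = Suc i" | "i = Suc j"
    using ij(3) by linarith
  then show ?thesis
  proof cases
    case 1
    have "adj_transp i j = j" "adj_transp i (Suc j) = Suc j"
      using 1 by (auto simp: transpose_def)
    then have "inversion_number (p \<circ> word_perm [i, j]) + length [i, j] = inversion_number p"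
      using step[of "[i]" j] step[of "[]" i] start ij descents by simp
    moreover have "braid_move [j, i] [i, j]"
      using 1 by (auto intro: braid_move.commute)
    ultimately show ?thesis
      using that[of "[j]" "[i]"] ij by simp
  next
    case 2
    have "inversion_number (p \<circ> word_perm [i, j, i]) + length [i, j, i] = inversion_number p"
      using step[of "[i, j]" i] step[of "[i]" j] step[of "[]" i] start ij descents 2 by simp
    then show ?thesis
      using that[of "[i, j]" "[j, i]"] 2 ij by (simp add: braid_move.braid_up)
  next
    case 3
    have "inversion_number (p \<circ> word_perm [i, j, i]) + length [i, j, i] = inversion_number p"
      using step[of "[i, j]" i] step[of "[i]" j] step[of "[]" i] start ij descents 3 by simp
    then show ?thesis
      using that[of "[i, j]" "[j, i]"] 3 ij by (simp add: braid_move.braid_down)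
  qed
qed

lemma reduced_words_braid_move_at_descents:
  assumes "p permutes {1..Suc N}" "i \<in> {1..N}" "j \<in> {1..N}" "i \<noteq> j"
    and "p (Suc i) < p i" "p (Suc j) < p j"
  obtains z l r where "braid_move (l @ [i]) (r @ [j])"
    "z @ l @ [i] \<in> reduced_words N p" "z @ r @ [j] \<in> reduced_words N p"
proof -
  obtain l r where lr: "braid_move (l @ [i]) (r @ [j])" "set l \<subseteq> {1..N}"
    "inversion_number (p \<circ> word_perm (rev (l @ [i]))) + length (l @ [i]) = inversion_number p"
    using braid_move_at_descents[OF assms] .
  obtain z where "z @ l @ [i] \<in> reduced_words N p"
    using exists_reduced_word_with_suffix[OF assms(1) _ lr(3)] lr(2) assms(2) by auto
  moreover have "braid_step (z @ l @ [i]) (z @ r @ [j])"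
    using braid_step.intros[OF lr(1), of z "[]"] by simp
  ultimately show ?thesis
    using that lr(1) reduced_words_braid_step by blast
qed

theorem reduced_words_braid_equiv:
  "u \<in> reduced_words N p \<Longrightarrow> v \<in> reduced_words N p \<Longrightarrow> braid_equiv u v"
proof (induction "length u" arbitrary: u v p rule: less_induct)
  case less
  have same_length: "length v = length u"
    using less.prems by (simp add: length_reduced_words)
  have IH: "braid_equiv a b" if "length a < length u" "a \<in> reduced_words N q" "b \<in> reduced_words N q"
    for a b q
    using less.hyps that by blast
  show ?case
  proof (cases u rule: rev_cases)
    case Nil
    then show ?thesis
      using same_length by simp
  next
    case (snoc x i)
    then obtain y j where v: "v = y @ [j]"
      using same_length by (cases v rule: rev_cases) auto
    have x: "x \<in> reduced_words N (p \<circ> adj_transp i)" "p (Suc i) < p i"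
      using reduced_words_snocD less.prems(1) snoc by blast+
    have y: "y \<in> reduced_words N (p \<circ> adj_transp j)" "p (Suc j) < p j"
      using reduced_words_snocD less.prems(2) v by blast+
    show ?thesis
    proof (cases "i = j")
      case True
      then show ?thesis
        using IH[OF _ x(1)] y(1) snoc v braid_equiv_append by simp
    next
      case False
      have p: "p permutes {1..Suc N}"
        using word_perm_permutes[of u N] less.prems(1) by (simp add: mem_reduced_words_iff)
      have ij: "i \<in> {1..N}" "j \<in> {1..N}"
        using less.prems snoc v by (simp_all add: mem_reduced_words_iff)
      obtain z l r where zlr: "braid_move (l @ [i]) (r @ [j])"
        "z @ l @ [i] \<in> reduced_words N p" "z @ r @ [j] \<in> reduced_words N p"
        using reduced_words_braid_move_at_descents[OF p ij False x(2) y(2)] .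
      have zl: "z @ l \<in> reduced_words N (p \<circ> adj_transp i)"
        using reduced_words_snocD(1)[of "z @ l" i N p] zlr(2) by simp
      have zr: "z @ r \<in> reduced_words N (p \<circ> adj_transp j)"
        using reduced_words_snocD(1)[of "z @ r" j N p] zlr(3) by simp
      have "braid_equiv x (z @ l)"
        by (rule IH[OF _ x(1) zl]) (simp add: snoc)
      moreover have "braid_equiv (z @ r) y"
        by (rule IH[OF _ zr y(1)])
          (use same_length length_reduced_words[OF zr] length_reduced_words[OF y(1)] v in simp)
      moreover have "braid_step (z @ l @ [i]) (z @ r @ [j])"
        using braid_step.intros[OF zlr(1), of z "[]"] by simp
      ultimately show ?thesis
        using snoc v braid_equiv_append[of x "z @ l" "[i]"] braid_equiv_append[of "z @ r" y "[j]"]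
        by (metis append_assoc rtranclp.rtrancl_into_rtrancl rtranclp_trans)
    qed
  qed
qed

lemma braid_equiv_set: "braid_equiv u v \<Longrightarrow> set u = set v"
  by (induction rule: rtranclp_induct) (auto dest: braid_step_invariants(3))

section \<open>Low and high parts of a word\<close>

definition low_part :: "nat \<Rightarrow> nat list \<Rightarrow> nat list" where
  "low_part m u = filter (\<lambda>i. i \<le> m) u"

definition high_part :: "nat \<Rightarrow> nat list \<Rightarrow> nat list" where
  "high_part m u = map (\<lambda>i. i - m) (filter (\<lambda>i. m < i) u)"

definition parts_reduced :: "nat \<Rightarrow> nat list \<Rightarrow> bool" where
  "parts_reduced m u \<longleftrightarrow> reduced (low_part m u) \<and> reduced (high_part m u)"

definition part_perms :: "nat \<Rightarrow> nat list \<Rightarrow> (nat \<Rightarrow> nat) \<times> (nat \<Rightarrow> nat)" where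
  "part_perms m u = (word_perm (low_part m u), word_perm (high_part m u))"

lemma low_part_append [simp]: "low_part m (u @ v) = low_part m u @ low_part m v"
  by (simp add: low_part_def)

lemma high_part_append [simp]: "high_part m (u @ v) = high_part m u @ high_part m v"
  by (simp add: high_part_def)

lemma length_low_part_high_part: "length u = length (low_part m u) + length (high_part m u)"
  using sum_length_filter_compl[of "\<lambda>i. i \<le> m" u] by (simp add: low_part_def high_part_def not_le)

lemma set_low_part: "set u \<subseteq> {1..m + n} \<Longrightarrow> set (low_part m u) \<subseteq> {1..m}"
  by (auto simp: low_part_def)

lemma set_high_part: "set u \<subseteq> {1..m + n} \<Longrightarrow> set (high_part m u) \<subseteq> {1..n}"
  by (fastforce simp: high_part_def)

text \<open>A braid move straddling the letters \<open>m\<close> and \<open>m + 1\<close> leaves a repeated letter in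
  one of the two parts.\<close>

lemma braid_move_parts:
  assumes "braid_move l r"
  shows "(\<exists>a. low_part m l = [a, a] \<or> high_part m l = [a, a])
    \<or> ((low_part m l = low_part m r \<or> braid_move (low_part m l) (low_part m r))
       \<and> (high_part m l = high_part m r \<or> braid_move (high_part m l) (high_part m r)))"
  using assms
proof induction
  case (commute i j)
  then show ?case
    by (auto simp: low_part_def high_part_def intro: braid_move.commute)
next
  case (braid_up i)
  consider "Suc i \<le> m" | "i = m" | "m < i"
    by linarith
  then show ?case
    using braid_move.braid_up[of "i - m"]
    by cases (auto simp: low_part_def high_part_def Suc_diff_le intro: braid_move.braid_up)
next
  case (braid_down i)
  consider "Suc i \<le> m" | "i = m" | "m < i"
    by linarith
  then show ?case
    using braid_move.braid_down[of "i - m"]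
    by cases (auto simp: low_part_def high_part_def Suc_diff_le intro: braid_move.braid_down)
qed

lemma reduced_replace_braid_move:
  assumes "l = r \<or> braid_move l r" "reduced (x @ l @ y)"
  shows "reduced (x @ r @ y) \<and> word_perm (x @ r @ y) = word_perm (x @ l @ y)"
  using assms braid_step_invariants[OF braid_step.intros] by metis

lemma braid_step_parts_reduced:
  assumes "set u \<subseteq> {1..m + n}" "braid_step u v" "parts_reduced m u"
  shows "parts_reduced m v \<and> part_perms m v = part_perms m u"
proof -
  obtain x l r y where u: "u = x @ l @ y" and v: "v = x @ r @ y" and lr: "braid_move l r"
    using assms(2) by (auto elim: braid_step.cases)
  have no_repeat: "\<not> (low_part m l = [a, a] \<or> high_part m l = [a, a])" for a
  proof
    assume "low_part m l = [a, a] \<or> high_part m l = [a, a]"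
    then have "low_part m u = low_part m x @ a # a # low_part m y
        \<or> high_part m u = high_part m x @ a # a # high_part m y"
      by (auto simp: u)
    then show False
      using assms(3) not_reduced_repeated_letter set_low_part[OF assms(1)]
        set_high_part[OF assms(1)]
      unfolding parts_reduced_def by metis
  qed
  then show ?thesis
    using braid_move_parts[OF lr, of m] assms(3)
      reduced_replace_braid_move[of "low_part m l" "low_part m r" "low_part m x" "low_part m y"]
      reduced_replace_braid_move[of "high_part m l" "high_part m r" "high_part m x" "high_part m y"]
    by (auto simp: u v parts_reduced_def part_perms_def)
qed

lemma braid_equiv_parts_reduced:
  assumes "braid_equiv u v" "set u \<subseteq> {1..m + n}" "parts_reduced m u"
  shows "parts_reduced m v \<and> part_perms m v = part_perms m u"
  using assms
proof (induction rule: rtranclp_induct)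
  case (step v w)
  then show ?case
    using braid_step_parts_reduced[of v m n w] braid_equiv_set by fastforce
qed simp

lemma not_parts_reduced_repeated_last:
  assumes "set (z @ [i]) \<subseteq> {1..m + n}"
  shows "\<not> parts_reduced m (z @ [i, i])"
proof (cases "i \<le> m")
  case True
  then have "low_part m (z @ [i, i]) = low_part m z @ [i, i]" "set (low_part m z @ [i, i]) \<subseteq> {1..m}"
    using assms set_low_part[of z m n] by (auto simp: low_part_def)
  then show ?thesis
    using not_reduced_repeated_letter[of "low_part m z" i "[]" m] by (simp add: parts_reduced_def)
next
  case False
  then have "high_part m (z @ [i, i]) = high_part m z @ [i - m, i - m]"
    "set (high_part m z @ [i - m, i - m]) \<subseteq> {1..n}"
    using assms set_high_part[of z m n] by (auto simp: high_part_def)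
  then show ?thesis
    using not_reduced_repeated_letter[of "high_part m z" "i - m" "[]" n] by (simp add: parts_reduced_def)
qed

lemma parts_reduced_imp_reduced:
  assumes "set u \<subseteq> {1..m + n}" "parts_reduced m u"
  shows "reduced u"
  using assms
proof (induction u rule: rev_induct)
  case (snoc i x)
  have x: "set x \<subseteq> {1..m + n}" and i: "i \<in> {1..m + n}"
    using snoc.prems(1) by auto
  have "parts_reduced m x"
    using snoc.prems set_low_part[OF snoc.prems(1)] set_high_part[OF snoc.prems(1)]
      reduced_appendD(1)[of "low_part m x"] reduced_appendD(1)[of "high_part m x"]
    by (simp add: parts_reduced_def)
  then have "reduced x"
    using snoc.IH x by blast
  show ?case
  proof (rule ccontr)
    assume "\<not> reduced (x @ [i])"
    txt \<open>Then \<open>x\<close> has a reduced word ending in \<open>i\<close>, so \<open>x @ [i]\<close> is braid equivalent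
      to a word ending in \<open>[i, i]\<close>.\<close>
    have p: "word_perm x permutes {1..Suc (m + n)}"
      using word_perm_permutes[OF x] .
    then have "word_perm x (Suc i) < word_perm x i"
      using \<open>\<not> reduced (x @ [i])\<close> reduced_snoc_iff[OF snoc.prems(1) \<open>reduced x\<close>]
        inj_adjacent_neq[OF permutes_inj[OF p], of i] by linarith
    then obtain z where z: "z @ [i] \<in> reduced_words (m + n) (word_perm x)"
      using reduced_word_ending_at_descent[OF p i] by blast
    moreover have "x \<in> reduced_words (m + n) (word_perm x)"
      using x \<open>reduced x\<close> by (simp add: mem_reduced_words_iff)
    ultimately have "braid_equiv (x @ [i]) (z @ [i, i])"
      using reduced_words_braid_equiv braid_equiv_append by fastforce
    then have "parts_reduced m (z @ [i, i])"
      using braid_equiv_parts_reduced snoc.prems by blast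
    moreover have "set (z @ [i]) \<subseteq> {1..m + n}"
      using z by (simp add: mem_reduced_words_iff)
    ultimately show False
      using not_parts_reduced_repeated_last by blast
  qed
qed simp

text \<open>By \<open>shuffles_shift_word\<close> below, these are the shuffles of the reduced words of \<open>s\<close>
  with the reduced words of \<open>t\<close> shifted up by \<open>m\<close>.\<close>

definition reduced_shuffles :: "nat \<Rightarrow> nat \<Rightarrow> (nat \<Rightarrow> nat) \<Rightarrow> (nat \<Rightarrow> nat) \<Rightarrow> nat list set" where
  "reduced_shuffles m n s t =
    {u. set u \<subseteq> {1..m + n} \<and> low_part m u \<in> reduced_words m s \<and> high_part m u \<in> reduced_words n t}"

lemma reduced_shuffles_fiber:
  assumes "u \<in> reduced_shuffles m n s t"
  shows "{u' \<in> reduced_shuffles m n s t. word_perm u' = word_perm u}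
    = reduced_words (m + n) (word_perm u)"
proof (intro equalityI subsetI)
  fix u' assume "u' \<in> {u' \<in> reduced_shuffles m n s t. word_perm u' = word_perm u}"
  then show "u' \<in> reduced_words (m + n) (word_perm u)"
    using parts_reduced_imp_reduced
    by (auto simp: reduced_shuffles_def parts_reduced_def mem_reduced_words_iff)
next
  fix u' assume u': "u' \<in> reduced_words (m + n) (word_perm u)"
  have u: "set u \<subseteq> {1..m + n}" "parts_reduced m u" "part_perms m u = (s, t)"
    using assms by (auto simp: reduced_shuffles_def parts_reduced_def part_perms_def mem_reduced_words_iff)
  then have "braid_equiv u u'"
    using u' parts_reduced_imp_reduced[OF u(1,2)]
    by (intro reduced_words_braid_equiv[of u "m + n" "word_perm u"]) (simp_all add: mem_reduced_words_iff)
  then have "parts_reduced m u' \<and> part_perms m u' = (s, t)"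
    using braid_equiv_parts_reduced u by metis
  then show "u' \<in> {u' \<in> reduced_shuffles m n s t. word_perm u' = word_perm u}"
    using u' set_low_part set_high_part
    by (auto simp: reduced_shuffles_def parts_reduced_def part_perms_def mem_reduced_words_iff)
qed

lemma finite_reduced_shuffles: "finite (reduced_shuffles m n s t)"
proof (rule finite_subset)
  show "reduced_shuffles m n s t
      \<subseteq> {u. set u \<subseteq> {1..m + n} \<and> length u \<le> inversion_number s + inversion_number t}"
  proof
    fix u assume "u \<in> reduced_shuffles m n s t"
    then have "set u \<subseteq> {1..m + n}" "length (low_part m u) = inversion_number s"
      "length (high_part m u) = inversion_number t"
      using length_reduced_words unfolding reduced_shuffles_def by blast+
    then show "u \<in> {u. set u \<subseteq> {1..m + n} \<and> length u \<le> inversion_number s + inversion_number t}"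
      using length_low_part_high_part[of u m] by simp
  qed
qed (rule finite_lists_length_le, simp)

section \<open>Linear extension from the basis\<close>

lemma lookup_pm_smult [simp]: "Poly_Mapping.lookup (pm_smult c p) k = c * Poly_Mapping.lookup p k"
  by (simp add: pm_smult_def map.rep_eq when_def)

interpretation pm: module "pm_smult :: 'k::field \<Rightarrow> ('a \<Rightarrow>\<^sub>0 'k) \<Rightarrow> 'a \<Rightarrow>\<^sub>0 'k"
  by standard (auto intro!: poly_mapping_eqI simp: lookup_add algebra_simps)

abbreviation pm_linear :: "(('a \<Rightarrow>\<^sub>0 'k::field) \<Rightarrow> 'b \<Rightarrow>\<^sub>0 'k) \<Rightarrow> bool" where
  "pm_linear \<equiv> module_hom pm_smult pm_smult"

lemma keys_pm_smult: "Poly_Mapping.keys (pm_smult c p) \<subseteq> Poly_Mapping.keys p"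
  by (auto simp: in_keys_iff)

lemma pm_smult_single: "pm_smult c (Poly_Mapping.single x 1) = Poly_Mapping.single x c"
  by (rule poly_mapping_eqI) (simp add: lookup_single when_def)

definition pm_extend :: "('a \<Rightarrow> 'b \<Rightarrow>\<^sub>0 'k::field) \<Rightarrow> ('a \<Rightarrow>\<^sub>0 'k) \<Rightarrow> 'b \<Rightarrow>\<^sub>0 'k" where
  "pm_extend g a = (\<Sum>x\<in>Poly_Mapping.keys a. pm_smult (Poly_Mapping.lookup a x) (g x))"

lemma pm_extend_superset:
  "finite A \<Longrightarrow> Poly_Mapping.keys a \<subseteq> A
    \<Longrightarrow> pm_extend g a = (\<Sum>x\<in>A. pm_smult (Poly_Mapping.lookup a x) (g x))"
  unfolding pm_extend_def by (rule sum.mono_neutral_left) (auto simp: in_keys_iff)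

lemma pm_linear_pm_extend:
  fixes g :: "'a \<Rightarrow> 'b \<Rightarrow>\<^sub>0 'k::field"
  shows "pm_linear (pm_extend g)"
proof (unfold module_hom_iff, intro conjI allI)
  fix a b :: "'a \<Rightarrow>\<^sub>0 'k::field"
  have "Poly_Mapping.keys (a + b) \<subseteq> Poly_Mapping.keys a \<union> Poly_Mapping.keys b"
    by (rule keys_add)
  then show "pm_extend g (a + b) = pm_extend g a + pm_extend g b"
    by (simp add: pm_extend_superset[of "Poly_Mapping.keys a \<union> Poly_Mapping.keys b"] lookup_add
        pm.scale_left_distrib sum.distrib)
next
  fix c :: 'k and a :: "'a \<Rightarrow>\<^sub>0 'k"
  show "pm_extend g (pm_smult c a) = pm_smult c (pm_extend g a)"
    using pm_extend_superset[OF _ keys_pm_smult, of a g c]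
    by (simp add: pm_extend_def pm.scale_sum_right)
qed (fact pm.module_axioms)+

lemma pm_extend_single: "pm_extend g (Poly_Mapping.single x 1) = g x"
  by (simp add: pm_extend_def)

lemma pm_extend_perm_elt: "pm_extend g (perm_elt N p) = (\<Sum>w\<in>reduced_words N p. g (w, N))"
  by (simp add: perm_elt_def W_basis_def module_hom.sum[OF pm_linear_pm_extend] pm_extend_single)

lemma pm_extend_pm_extend:
  "pm_extend (\<lambda>x. pm_extend (h x) b) a
    = (\<Sum>x\<in>Poly_Mapping.keys a. \<Sum>y\<in>Poly_Mapping.keys b.
        pm_smult (Poly_Mapping.lookup a x * Poly_Mapping.lookup b y) (h x y))"
  by (simp add: pm_extend_def pm.scale_sum_right)

lemma W_mult_eq_pm_extend_left: "W_mult a b = pm_extend (\<lambda>x. pm_extend (W_mult_basis x) b) a"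
  by (simp add: W_mult_def pm_extend_pm_extend)

lemma W_mult_eq_pm_extend_right: "W_mult a b = pm_extend (\<lambda>y. pm_extend (\<lambda>x. W_mult_basis x y) a) b"
  by (simp add: W_mult_def pm_extend_pm_extend mult.commute sum.swap[of _ "Poly_Mapping.keys a"])

lemma W_tensor_eq_pm_extend:
  "W_tensor a b = pm_extend (\<lambda>x. pm_extend (\<lambda>y. Poly_Mapping.single (x, y) 1) b) a"
  by (simp add: W_tensor_def pm_extend_pm_extend pm_smult_single)

lemma W_coprod_eq_pm_extend: "W_coprod = pm_extend W_coprod_basis"
  by (simp add: fun_eq_iff W_coprod_def pm_extend_def)

lemma W_deg_part_eq_pm_extend:
  "W_deg_part d = pm_extend (\<lambda>x. if length (fst x) = d then Poly_Mapping.single x 1 else 0)"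
  by (simp add: fun_eq_iff W_deg_part_def pm_extend_def if_distrib pm_smult_single cong: if_cong)

section \<open>Product and coproduct of the elements [pi]\<close>

lemma shuffle_ms_eq_mset_set_shuffles:
  "set xs \<inter> set ys = {} \<Longrightarrow> shuffle_ms xs ys = mset_set (shuffles xs ys)"
proof (induction xs ys rule: shuffle_ms.induct)
  case (3 x xs y ys)
  have "(#) x ` shuffles xs (y # ys) \<inter> (#) y ` shuffles (x # xs) ys = {}"
    using "3.prems" by auto
  then show ?case
    using "3" by (simp add: image_mset_mset_set mset_set_Union)
qed simp_all

lemma shift_high_part: "shift_word (high_part m u) m = filter (\<lambda>i. m < i) u"
  by (induction u) (auto simp: shift_word_def high_part_def)

lemma shuffles_shift_word:
  assumes "\<forall>i\<in>set v. i \<le> m" "\<forall>i\<in>set w. 0 < i"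
  shows "shuffles v (shift_word w m) = {u. low_part m u = v \<and> high_part m u = w}"
proof -
  have "\<forall>i\<in>set (shift_word w m). \<not> i \<le> m"
    using assms(2) by (auto simp: shift_word_def)
  then have "shuffles v (shift_word w m) = partition (\<lambda>i. i \<le> m) -` {(v, shift_word w m)}"
    using inv_image_partition[of v "\<lambda>i. i \<le> m" "shift_word w m"] assms(1) by simp
  also have "\<dots> = {u. low_part m u = v \<and> shift_word (high_part m u) m = shift_word w m}"
    by (auto simp: partition_filter_conv low_part_def shift_high_part o_def not_le)
  finally show ?thesis
    by (simp add: shift_word_def)
qed

lemma W_mult_basis_eq:
  assumes "set v \<subseteq> {1..m}" "set w \<subseteq> {1..n}"
  shows "W_mult_basis (v, m) (w, n) = (\<Sum>u | low_part m u = v \<and> high_part m u = w. W_basis u (m + n))"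
proof -
  have sep: "\<forall>i\<in>set v. i \<le> m" "\<forall>i\<in>set w. 0 < i"
    using assms by auto
  then have "set v \<inter> set (shift_word w m) = {}"
    by (force simp: shift_word_def)
  then show ?thesis
    using shuffles_shift_word[OF sep]
    by (simp add: W_mult_basis_def shuffle_ms_eq_mset_set_shuffles sum_unfold_sum_mset)
qed

lemma set_subset_if_parts:
  "set (low_part m u) \<subseteq> {1..m} \<Longrightarrow> set (high_part m u) \<subseteq> {1..n} \<Longrightarrow> set u \<subseteq> {1..m + n}"
  by (force simp: low_part_def high_part_def)

lemma W_mult_perm_elt:
  "W_mult (perm_elt m s) (perm_elt n t)
    = (\<Sum>p\<in>word_perm ` reduced_shuffles m n s t. perm_elt (m + n) p :: 'k::field W)"
proof -
  let ?S = "reduced_shuffles m n s t" and ?B = "\<lambda>u. W_basis u (m + n) :: 'k W"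
  have fiber: "{u \<in> ?S. (low_part m u, high_part m u) = (v, w)} = {u. low_part m u = v \<and> high_part m u = w}"
    if "(v, w) \<in> reduced_words m s \<times> reduced_words n t" for v w
    using that set_subset_if_parts by (auto simp: reduced_shuffles_def mem_reduced_words_iff)
  have "W_mult (perm_elt m s) (perm_elt n t :: 'k W)
      = (\<Sum>(v, w)\<in>reduced_words m s \<times> reduced_words n t. W_mult_basis (v, m) (w, n))"
    by (simp add: W_mult_eq_pm_extend_left pm_extend_perm_elt sum.cartesian_product)
  also have "\<dots> = (\<Sum>y\<in>reduced_words m s \<times> reduced_words n t.
      \<Sum>u\<in>{u \<in> ?S. (low_part m u, high_part m u) = y}. ?B u)"
    using fiber by (intro sum.cong refl) (auto simp: W_mult_basis_eq mem_reduced_words_iff)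
  also have "\<dots> = (\<Sum>u\<in>?S. ?B u)"
    by (rule sum.group[OF finite_reduced_shuffles]) (auto simp: finite_reduced_words reduced_shuffles_def)
  also have "\<dots> = (\<Sum>p\<in>word_perm ` ?S. \<Sum>u\<in>{u \<in> ?S. word_perm u = p}. ?B u)"
    by (rule sum.group[symmetric]) (auto simp: finite_reduced_shuffles)
  also have "\<dots> = (\<Sum>p\<in>word_perm ` ?S. perm_elt (m + n) p)"
    by (intro sum.cong refl) (auto simp: reduced_shuffles_fiber perm_elt_def)
  finally show ?thesis .
qed

lemma sum_reduced_words_splits:
  "(\<Sum>w\<in>reduced_words N p. \<Sum>i\<in>{0..length w}. f (take i w) (drop i w))
    = (\<Sum>(u, v)\<in>{(u, v). u @ v \<in> reduced_words N p}. f u v)"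
proof -
  have "(\<Sum>w\<in>reduced_words N p. \<Sum>i\<in>{0..length w}. f (take i w) (drop i w))
      = (\<Sum>(w, i)\<in>(SIGMA w:reduced_words N p. {0..length w}). f (take i w) (drop i w))"
    by (rule sum.Sigma) (simp_all add: finite_reduced_words)
  also have "\<dots> = (\<Sum>(u, v)\<in>{(u, v). u @ v \<in> reduced_words N p}. f u v)"
    by (rule sum.reindex_bij_witness[where i = "\<lambda>(u, v). (u @ v, length u)"
          and j = "\<lambda>(w, i). (take i w, drop i w)"]) auto
  finally show ?thesis .
qed

lemma W_coprod_perm_elt:
  "W_coprod (perm_elt N p :: 'k::field W)
    = (\<Sum>(q, r)\<in>(\<lambda>(u, v). (word_perm u, word_perm v)) ` {(u, v). u @ v \<in> reduced_words N p}.
        W_tensor (perm_elt N q) (perm_elt N r))"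
proof -
  let ?D = "{(u, v). u @ v \<in> reduced_words N p}" and ?g = "\<lambda>(u, v). (word_perm u, word_perm v)"
    and ?B = "\<lambda>(u, v). Poly_Mapping.single ((u, N), (v, N)) (1 :: 'k)"
  have "?D \<subseteq> (\<lambda>(w, i). (take i w, drop i w)) ` (SIGMA w:reduced_words N p. {..length w})"
  proof
    fix x assume "x \<in> ?D"
    then obtain u v where "x = (u, v)" "u @ v \<in> reduced_words N p"
      by auto
    then show "x \<in> (\<lambda>(w, i). (take i w, drop i w)) ` (SIGMA w:reduced_words N p. {..length w})"
      by (intro image_eqI[of _ _ "(u @ v, length u)"]) auto
  qed
  then have "finite ?D"
    by (rule finite_subset) (intro finite_imageI finite_SigmaI finite_reduced_words finite_atMost)
  have "W_coprod (perm_elt N p :: 'k W) = (\<Sum>x\<in>?D. ?B x)"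
    using sum_reduced_words_splits[of "\<lambda>u v. Poly_Mapping.single ((u, N), (v, N)) 1" N p]
    by (simp add: W_coprod_eq_pm_extend pm_extend_perm_elt W_coprod_basis_def)
  also have "\<dots> = (\<Sum>y\<in>?g ` ?D. \<Sum>x\<in>{x \<in> ?D. ?g x = y}. ?B x)"
    by (rule sum.group[symmetric]) (simp_all add: \<open>finite ?D\<close>)
  also have "\<dots> = (\<Sum>(q, r)\<in>?g ` ?D. \<Sum>x\<in>reduced_words N q \<times> reduced_words N r. ?B x)"
  proof (intro sum.cong refl)
    fix y assume "y \<in> ?g ` ?D"
    then obtain u v where uv: "u @ v \<in> reduced_words N p" and y: "y = (word_perm u, word_perm v)"
      by auto
    have "{x \<in> ?D. ?g x = y} = reduced_words N (word_perm u) \<times> reduced_words N (word_perm v)"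
      using append_mem_reduced_words_iff[OF uv] by (auto simp: y)
    then show "(\<Sum>x\<in>{x \<in> ?D. ?g x = y}. ?B x)
        = (case y of (q, r) \<Rightarrow> \<Sum>x\<in>reduced_words N q \<times> reduced_words N r. ?B x)"
      by (simp add: y)
  qed
  also have "\<dots> = (\<Sum>(q, r)\<in>?g ` ?D. W_tensor (perm_elt N q) (perm_elt N r))"
    by (simp add: W_tensor_eq_pm_extend pm_extend_perm_elt sum.cartesian_product)
  finally show ?thesis .
qed

section \<open>The subspace Pi\<close>

lemma pm_linear_W_deg_part: "pm_linear (W_deg_part d)"
  by (simp add: W_deg_part_eq_pm_extend pm_linear_pm_extend)

lemma pm_linear_W_coprod: "pm_linear W_coprod"
  by (simp add: W_coprod_eq_pm_extend pm_linear_pm_extend)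

lemma pm_linear_W_mult_left: "pm_linear (\<lambda>a. W_mult a b)"
proof -
  have "(\<lambda>a. W_mult a b) = pm_extend (\<lambda>x. pm_extend (W_mult_basis x) b)"
    by (simp add: fun_eq_iff W_mult_eq_pm_extend_left)
  then show ?thesis
    by (simp add: pm_linear_pm_extend)
qed

lemma pm_linear_W_mult_right: "pm_linear (W_mult a)"
proof -
  have "W_mult a = pm_extend (\<lambda>y. pm_extend (\<lambda>x. W_mult_basis x y) a)"
    by (simp add: fun_eq_iff W_mult_eq_pm_extend_right)
  then show ?thesis
    by (simp add: pm_linear_pm_extend)
qed

lemma Pi_space_eq: "Pi_space = pm.span {perm_elt n \<pi> | n \<pi>. \<pi> permutes {1..n + 1}}"
  by (simp add: Pi_space_def lin_span_def)

lemma subspace_Pi_space: "pm.subspace Pi_space"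
  by (simp add: Pi_space_eq)

lemma perm_elt_in_Pi_space: "\<pi> permutes {1..Suc n} \<Longrightarrow> perm_elt n \<pi> \<in> Pi_space"
  unfolding Pi_space_eq by (intro pm.span_base) auto

lemma pm_linear_image_Pi_space:
  assumes "pm_linear f" "pm.subspace V" "\<And>n \<pi>. \<pi> permutes {1..Suc n} \<Longrightarrow> f (perm_elt n \<pi>) \<in> V"
    and "a \<in> Pi_space"
  shows "f a \<in> V"
proof -
  have "Pi_space \<subseteq> f -` V"
    unfolding Pi_space_eq
    using assms(3) module_hom.subspace_vimage[OF assms(1,2)] by (intro pm.span_minimal) auto
  then show ?thesis
    using assms(4) by blast
qed

lemma subspace_W_space: "pm.subspace W_space"
proof (unfold pm.subspace_def, intro conjI ballI allI)
  show "0 \<in> W_space"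
    by (simp add: W_space_def)
  show "a + b \<in> W_space" if "a \<in> W_space" "b \<in> W_space" for a b :: "'k::field W"
    using that keys_add[of a b] by (fastforce simp: W_space_def)
  show "pm_smult c a \<in> W_space" if "a \<in> W_space" for c and a :: "'k::field W"
    using that keys_pm_smult[of c a] by (fastforce simp: W_space_def)
qed

lemma Pi_space_subset_W_space: "Pi_space \<subseteq> W_space"
  unfolding Pi_space_eq
proof (rule pm.span_minimal[OF _ subspace_W_space], safe)
  fix n \<pi>
  have "W_basis w n \<in> W_space" if "w \<in> reduced_words n \<pi>" for w
    using that by (simp add: W_basis_def W_space_def mem_reduced_words_iff)
  then show "perm_elt n \<pi> \<in> W_space"
    unfolding perm_elt_def by (rule pm.subspace_sum[OF subspace_W_space])
qed

lemma W_unit_eq_perm_elt: "W_unit = perm_elt 0 id"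
proof -
  have "reduced_words 0 id = {[]}"
    by (auto simp: mem_reduced_words_iff)
  then show ?thesis
    by (simp add: W_unit_def perm_elt_def)
qed

lemma W_deg_part_perm_elt:
  "W_deg_part d (perm_elt N p) = (if d = inversion_number p then perm_elt N p else 0)"
proof -
  have "W_deg_part d (perm_elt N p)
      = (\<Sum>w\<in>reduced_words N p. if d = inversion_number p then W_basis w N else 0)"
    by (auto simp: W_deg_part_eq_pm_extend pm_extend_perm_elt W_basis_def length_reduced_words
        intro: sum.cong)
  also have "\<dots> = (if d = inversion_number p then perm_elt N p else 0)"
    by (simp add: perm_elt_def)
  finally show ?thesis .
qed

lemma W_mult_perm_elt_in_Pi_space: "W_mult (perm_elt m s) (perm_elt n t) \<in> Pi_space"
proof -
  have "perm_elt (m + n) (word_perm u) \<in> Pi_space" if "u \<in> reduced_shuffles m n s t" for u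
    using that perm_elt_in_Pi_space[OF word_perm_permutes, of u "m + n"]
    unfolding reduced_shuffles_def by blast
  then show ?thesis
    unfolding W_mult_perm_elt by (auto intro: pm.subspace_sum[OF subspace_Pi_space])
qed

lemma subspace_tensor_span: "pm.subspace (tensor_span A)"
  by (simp add: tensor_span_def lin_span_def)

lemma W_coprod_perm_elt_in_tensor_span: "W_coprod (perm_elt N p) \<in> tensor_span Pi_space"
proof -
  have tensor_mem: "W_tensor (perm_elt N (word_perm u)) (perm_elt N (word_perm v)) \<in> tensor_span Pi_space"
    if "u @ v \<in> reduced_words N p" for u v
  proof -
    have u: "set u \<subseteq> {1..N}" and v: "set v \<subseteq> {1..N}"
      using that by (simp_all add: mem_reduced_words_iff)
    note perm_elt_in_Pi_space[OF word_perm_permutes[OF u]] perm_elt_in_Pi_space[OF word_perm_permutes[OF v]]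
    then show ?thesis
      unfolding tensor_span_def lin_span_def by (intro pm.span_base) blast
  qed
  show ?thesis
    unfolding W_coprod_perm_elt
    by (rule pm.subspace_sum[OF subspace_tensor_span]) (auto intro: tensor_mem)
qed

theorem theorem4p1:
  shows "(Pi_space :: 'k::field W set) \<subseteq> W_space
    \<and> (\<forall>a\<in>(Pi_space :: 'k W set). \<forall>d. W_deg_part d a \<in> Pi_space)
    \<and> (W_unit :: 'k W) \<in> Pi_space
    \<and> (\<forall>a\<in>(Pi_space :: 'k W set). \<forall>b\<in>Pi_space. W_mult a b \<in> Pi_space)
    \<and> (\<forall>a\<in>(Pi_space :: 'k W set). W_coprod a \<in> tensor_span Pi_space)"
proof (intro conjI ballI allI)
  show "Pi_space \<subseteq> W_space"
    by (rule Pi_space_subset_W_space)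
  show "W_unit \<in> Pi_space"
    by (simp add: W_unit_eq_perm_elt perm_elt_in_Pi_space permutes_id)
next
  fix a :: "'k W" and d assume "a \<in> Pi_space"
  then show "W_deg_part d a \<in> Pi_space"
    by (rule pm_linear_image_Pi_space[OF pm_linear_W_deg_part subspace_Pi_space, rotated])
      (simp add: W_deg_part_perm_elt perm_elt_in_Pi_space pm.subspace_0[OF subspace_Pi_space])
next
  fix a b :: "'k W" assume "a \<in> Pi_space" "b \<in> Pi_space"
  have "W_mult (perm_elt m s) b \<in> Pi_space" for m s
    using pm_linear_W_mult_right subspace_Pi_space W_mult_perm_elt_in_Pi_space \<open>b \<in> Pi_space\<close>
    by (rule pm_linear_image_Pi_space)
  with \<open>a \<in> Pi_space\<close> show "W_mult a b \<in> Pi_space"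
    by (rule pm_linear_image_Pi_space[OF pm_linear_W_mult_left subspace_Pi_space, rotated])
next
  fix a :: "'k W" assume "a \<in> Pi_space"
  then show "W_coprod a \<in> tensor_span Pi_space"
    by (rule pm_linear_image_Pi_space[OF pm_linear_W_coprod subspace_tensor_span, rotated])
      (rule W_coprod_perm_elt_in_tensor_span)
qed

end
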